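(* Let $(A,G)$ be an admissible pair with $A=(a_{ij})\in M_{Q_0}(\mathbb Z)$, and let $\Omega=\{i_1,\ldots,i_n\}$ be a $G$-orbit in $Q_0$. Then the coefficients $a^{(n)}_{ij}$ of $A^{(n)}=\mu_{i_n}\circ\cdots\circ\mu_{i_1}(A)$ are given by $$a^{(n)}_{ij}=\begin{cases}-a_{ij}&\text{if } i\in\Omega\text{ or } j\in\Omega,\\ a_{ij}+\frac12\sum_{k=1}^n\big(|a_{i,i_k}|a_{i_k,j}+a_{i,i_k}|a_{i_k,j}|\big)&\text{otherwise.}\end{cases}$$
   Context: $Q_0$ finite; $A$ skew-symmetrizable ($DA$ skew-symmetric for a positive integer diagonal $D$). Mutation $\mu_k(B)=(b'_{ij})$: $b'_{ij}=-b_{ij}$ if $k\in\{i,j\}$, else $b_{ij}+\tfrac12(|b_{ik}|b_{kj}+b_{ik}|b_{kj}|)$. An automorphism of $A$ is a permutation $g$ of $Q_0$ with $a_{gi,gj}=a_{ij}$; a group $G$ of such permutations is admissible (and $(A,G)$ an admissible pair) if for distinct $i,j$ in the same $G$-orbit there is no path of length $1$ or $2$ from $i$ to $j$ in the valued quiver of $A$ (i.e. $a_{ij}\le0$ and no $k$ with $a_{ik}>0$, $a_{kj}>0$). *)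

theory Defs
  imports Complex_Main
begin

text \<open>Matrices indexed by a finite index set Q (entries outside Q are irrelevant).\<close>

definition skew_symmetrizable :: "'q set \<Rightarrow> ('q \<Rightarrow> 'q \<Rightarrow> int) \<Rightarrow> bool" where
  "skew_symmetrizable Q A \<longleftrightarrow>
     (\<exists>D :: 'q \<Rightarrow> int. (\<forall>i\<in>Q. D i > 0) \<and>
        (\<forall>i\<in>Q. \<forall>j\<in>Q. D i * A i j = - (D j * A j i)))"

text \<open>Matrix mutation at k; the half-sum is always an integer, so we use integer division
  by 2 which is exact.\<close>
definition mut :: "'q \<Rightarrow> ('q \<Rightarrow> 'q \<Rightarrow> int) \<Rightarrow> ('q \<Rightarrow> 'q \<Rightarrow> int)" where
  "mut k B = (\<lambda>i j. if i = k \<or> j = k then - B i j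
                     else B i j + (\<bar>B i k\<bar> * B k j + B i k * \<bar>B k j\<bar>) div 2)"

definition is_automorphism :: "'q set \<Rightarrow> ('q \<Rightarrow> 'q \<Rightarrow> int) \<Rightarrow> ('q \<Rightarrow> 'q) \<Rightarrow> bool" where
  "is_automorphism Q A g \<longleftrightarrow> bij_betw g Q Q \<and> (\<forall>i\<in>Q. \<forall>j\<in>Q. A (g i) (g j) = A i j)"

definition perm_group_on :: "'q set \<Rightarrow> ('q \<Rightarrow> 'q) set \<Rightarrow> bool" where
  "perm_group_on Q G \<longleftrightarrow> (\<forall>g\<in>G. bij_betw g Q Q)
     \<and> (\<exists>e\<in>G. \<forall>i\<in>Q. e i = i)
     \<and> (\<forall>g\<in>G. \<forall>h\<in>G. \<exists>c\<in>G. \<forall>i\<in>Q. c i = g (h i))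
     \<and> (\<forall>g\<in>G. \<exists>h\<in>G. \<forall>i\<in>Q. h (g i) = i)"

definition admissible_pair :: "'q set \<Rightarrow> ('q \<Rightarrow> 'q \<Rightarrow> int) \<Rightarrow> ('q \<Rightarrow> 'q) set \<Rightarrow> bool" where
  "admissible_pair Q A G \<longleftrightarrow>
     finite Q \<and> skew_symmetrizable Q A \<and> perm_group_on Q G \<and>
     (\<forall>g\<in>G. is_automorphism Q A g) \<and>
     (\<forall>i\<in>Q. \<forall>g\<in>G. g i \<noteq> i \<longrightarrow>
        A i (g i) \<le> 0 \<and> \<not> (\<exists>k\<in>Q. A i k > 0 \<and> A k (g i) > 0))"

definition G_orbit :: "('q \<Rightarrow> 'q) set \<Rightarrow> 'q \<Rightarrow> 'q set" where
  "G_orbit G i = (\<lambda>g. g i) ` G"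

end

theory Submission
  imports Defs
begin

text \<open>Vertices of one orbit of an admissible group are pairwise unlinked: admissibility makes
  both entries between two of them non-positive, and skew-symmetrizability then forces them to
  vanish. Mutating at a vertex k leaves its own row and column unchanged up to sign, so when the
  vertices of the orbit are pairwise unlinked, each mutation of the sequence sees the original
  entries in the row and column it uses, and the gains of the single mutations simply add up.\<close>

definition mut_gain :: "('q \<Rightarrow> 'q \<Rightarrow> int) \<Rightarrow> 'q \<Rightarrow> 'q \<Rightarrow> 'q \<Rightarrow> int" where
  "mut_gain B i k j = (\<bar>B i k\<bar> * B k j + B i k * \<bar>B k j\<bar>) div 2"

lemma mut_eq: "mut k B i j = (if i = k \<or> j = k then - B i j else B i j + mut_gain B i k j)"
  by (simp add: mut_def mut_gain_def)

lemma mut_gain_eq_0: "B i k = 0 \<or> B k j = 0 \<Longrightarrow> mut_gain B i k j = 0"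
  by (auto simp: mut_gain_def)

lemma even_abs_mult_add_mult_abs: "even (\<bar>a\<bar> * b + a * \<bar>b\<bar> :: int)"
  by (cases "a \<ge> 0"; cases "b \<ge> 0") auto

lemma of_int_mut_gain:
  "real_of_int (mut_gain B i k j) = real_of_int (\<bar>B i k\<bar> * B k j + B i k * \<bar>B k j\<bar>) / 2"
proof -
  obtain c where "\<bar>B i k\<bar> * B k j + B i k * \<bar>B k j\<bar> = 2 * c"
    using even_abs_mult_add_mult_abs by blast
  then show ?thesis
    by (simp add: mut_gain_def)
qed

lemma of_int_sum_list_mut_gain:
  "real_of_int (\<Sum>k\<leftarrow>ks. mut_gain B i k j) = (1/2) * (\<Sum>n<length ks.
      real_of_int (\<bar>B i (ks ! n)\<bar> * B (ks ! n) j + B i (ks ! n) * \<bar>B (ks ! n) j\<bar>))"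
proof -
  have "real_of_int (\<Sum>k\<leftarrow>ks. mut_gain B i k j) =
      (\<Sum>n<length ks. real_of_int (mut_gain B i (ks ! n) j))"
    by (simp add: sum_list_sum_nth atLeast0LessThan)
  then show ?thesis
    unfolding of_int_mut_gain sum_distrib_left by simp
qed

lemma foldl_mut_unlinked:
  assumes "distinct ks" and "\<forall>a\<in>set ks. \<forall>b\<in>set ks. A a b = 0"
  shows "foldl (\<lambda>B k. mut k B) A ks i j =
    (if i \<in> set ks \<or> j \<in> set ks then - A i j else A i j + (\<Sum>k\<leftarrow>ks. mut_gain A i k j))"
  using assms
proof (induction ks arbitrary: i j rule: rev_induct)
  case Nil
  then show ?case by simp
next
  case (snoc x xs)
  define B where "B = foldl (\<lambda>B k. mut k B) A xs"
  have B: "B i j = (if i \<in> set xs \<or> j \<in> set xs then - A i j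
      else A i j + (\<Sum>k\<leftarrow>xs. mut_gain A i k j))" for i j
    unfolding B_def using snoc by (intro snoc.IH) auto
  have unlinked: "A a b = 0" if "a \<in> insert x (set xs)" "b \<in> insert x (set xs)" for a b
    using snoc.prems(2) that by auto
  have "x \<notin> set xs"
    using snoc.prems(1) by simp
  have col: "B i x = A i x" for i
  proof -
    have "(\<Sum>k\<leftarrow>xs. mut_gain A i k x) = (\<Sum>k\<leftarrow>xs. 0)"
      by (intro arg_cong[where f = sum_list] map_cong) (auto intro: mut_gain_eq_0 unlinked)
    then show ?thesis
      using B[of i x] unlinked[of i x] \<open>x \<notin> set xs\<close> by auto
  qed
  have row: "B x j = A x j" for j
  proof -
    have "(\<Sum>k\<leftarrow>xs. mut_gain A x k j) = (\<Sum>k\<leftarrow>xs. 0)"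
      by (intro arg_cong[where f = sum_list] map_cong) (auto intro: mut_gain_eq_0 unlinked)
    then show ?thesis
      using B[of x j] unlinked[of x j] \<open>x \<notin> set xs\<close> by auto
  qed
  have "foldl (\<lambda>B k. mut k B) A (xs @ [x]) i j = mut x B i j"
    by (simp add: B_def)
  also have "\<dots> = (if i \<in> set (xs @ [x]) \<or> j \<in> set (xs @ [x]) then - A i j
      else A i j + (\<Sum>k\<leftarrow>xs @ [x]. mut_gain A i k j))"
  proof (cases "i = x \<or> j = x")
    case True
    then show ?thesis
      using col[of i] row[of j] unlinked[of i j] B[of i j] by (auto simp: mut_eq)
  next
    case False
    have "mut_gain B i x j = mut_gain A i x j"
      by (simp add: mut_gain_def col row)
    moreover have "mut_gain A i x j = 0" if "i \<in> set xs \<or> j \<in> set xs"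
      using that by (auto intro: mut_gain_eq_0 unlinked)
    ultimately show ?thesis
      using False B[of i j] by (auto simp: mut_eq)
  qed
  finally show ?case .
qed

lemma perm_group_on_inverse:
  "perm_group_on Q G \<Longrightarrow> g \<in> G \<Longrightarrow> \<exists>h\<in>G. \<forall>i\<in>Q. h (g i) = i"
  by (simp add: perm_group_on_def)

lemma perm_group_on_compose:
  "perm_group_on Q G \<Longrightarrow> g \<in> G \<Longrightarrow> h \<in> G \<Longrightarrow> \<exists>c\<in>G. \<forall>i\<in>Q. c i = g (h i)"
  by (simp add: perm_group_on_def)

lemma G_orbit_subset:
  assumes "perm_group_on Q G" and "i0 \<in> Q"
  shows "G_orbit G i0 \<subseteq> Q"
proof
  fix a assume "a \<in> G_orbit G i0"
  then obtain g where "g \<in> G" "a = g i0"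
    by (auto simp: G_orbit_def)
  with assms show "a \<in> Q"
    unfolding perm_group_on_def by (metis bij_betwE)
qed

lemma G_orbit_transitive:
  assumes "perm_group_on Q G" and "i0 \<in> Q" and "a \<in> G_orbit G i0" and "b \<in> G_orbit G i0"
  shows "\<exists>c\<in>G. c a = b"
proof -
  obtain g h where "g \<in> G" "a = g i0" "h \<in> G" "b = h i0"
    using assms(3,4) by (auto simp: G_orbit_def)
  obtain g' where "g' \<in> G" "g' a = i0"
    using perm_group_on_inverse[OF assms(1) \<open>g \<in> G\<close>] assms(2) \<open>a = g i0\<close> by blast
  obtain c where "c \<in> G" "\<forall>i\<in>Q. c i = h (g' i)"
    using perm_group_on_compose[OF assms(1) \<open>h \<in> G\<close> \<open>g' \<in> G\<close>] by blast
  moreover have "a \<in> Q"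
    using G_orbit_subset[OF assms(1,2)] assms(3) by blast
  ultimately have "c a = b"
    using \<open>g' a = i0\<close> \<open>b = h i0\<close> by simp
  with \<open>c \<in> G\<close> show ?thesis by blast
qed

lemma skew_symmetrizable_diag_eq_0:
  assumes "skew_symmetrizable Q A" and "a \<in> Q"
  shows "A a a = 0"
proof -
  obtain D where "D a > 0" "D a * A a a = - (D a * A a a)"
    using assms unfolding skew_symmetrizable_def by blast
  then show ?thesis by simp
qed

lemma skew_symmetrizable_nonpos_antisym:
  assumes "skew_symmetrizable Q A" and "a \<in> Q" "b \<in> Q" and "A a b \<le> 0" "A b a \<le> 0"
  shows "A a b = 0"
proof -
  obtain D where "D a > 0" "D b > 0" "D a * A a b = - (D b * A b a)"
    using assms(1-3) unfolding skew_symmetrizable_def by blast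
  with \<open>A b a \<le> 0\<close> have "D a * A a b \<ge> 0"
    by (simp add: mult_nonneg_nonpos)
  with \<open>D a > 0\<close> \<open>A a b \<le> 0\<close> show ?thesis
    by (simp add: zero_le_mult_iff)
qed

lemma admissible_pair_moved_nonpos:
  "admissible_pair Q A G \<Longrightarrow> i \<in> Q \<Longrightarrow> g \<in> G \<Longrightarrow> g i \<noteq> i \<Longrightarrow> A i (g i) \<le> 0"
  by (simp add: admissible_pair_def)

lemma admissible_orbit_nonpos:
  assumes "admissible_pair Q A G" and "i0 \<in> Q"
    and "a \<in> G_orbit G i0" and "b \<in> G_orbit G i0" and "a \<noteq> b"
  shows "A a b \<le> 0"
proof -
  have "perm_group_on Q G"
    using assms(1) by (simp add: admissible_pair_def)
  then obtain c where "c \<in> G" "c a = b"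
    using G_orbit_transitive[OF _ assms(2-4)] by blast
  moreover have "a \<in> Q"
    using G_orbit_subset[OF \<open>perm_group_on Q G\<close> assms(2)] assms(3) by blast
  ultimately show ?thesis
    using admissible_pair_moved_nonpos[OF assms(1) \<open>a \<in> Q\<close> \<open>c \<in> G\<close>] assms(5) by simp
qed

lemma admissible_orbit_unlinked:
  assumes "admissible_pair Q A G" and "i0 \<in> Q"
    and "a \<in> G_orbit G i0" and "b \<in> G_orbit G i0"
  shows "A a b = 0"
proof -
  have skew: "skew_symmetrizable Q A" and "perm_group_on Q G"
    using assms(1) by (simp_all add: admissible_pair_def)
  then have "a \<in> Q" "b \<in> Q"
    using G_orbit_subset[OF _ assms(2)] assms(3,4) by blast+
  show ?thesis
  proof (cases "a = b")
    case True
    then show ?thesis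
      using skew_symmetrizable_diag_eq_0[OF skew \<open>a \<in> Q\<close>] by simp
  next
    case False
    have "A a b \<le> 0" "A b a \<le> 0"
      using admissible_orbit_nonpos[OF assms] admissible_orbit_nonpos[OF assms(1,2,4,3)] False
      by auto
    then show ?thesis
      using skew_symmetrizable_nonpos_antisym[OF skew \<open>a \<in> Q\<close> \<open>b \<in> Q\<close>] by simp
  qed
qed

theorem mainTheorem8:
  fixes Q :: "'q set" and A :: "'q \<Rightarrow> 'q \<Rightarrow> int" and G :: "('q \<Rightarrow> 'q) set"
    and ks :: "'q list" and i0 :: 'q
  assumes "admissible_pair Q A G"
    and "i0 \<in> Q"
    and "distinct ks" and "set ks = G_orbit G i0"
  shows "\<forall>i\<in>Q. \<forall>j\<in>Q.
    real_of_int (foldl (\<lambda>B k. mut k B) A ks i j) =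
      (if i \<in> set ks \<or> j \<in> set ks then - real_of_int (A i j)
       else real_of_int (A i j) + (1/2) * (\<Sum>k<length ks.
          real_of_int (\<bar>A i (ks ! k)\<bar> * A (ks ! k) j + A i (ks ! k) * \<bar>A (ks ! k) j\<bar>)))"
proof (intro ballI)
  fix i j
  have unlinked: "\<forall>a\<in>set ks. \<forall>b\<in>set ks. A a b = 0"
    using admissible_orbit_unlinked[OF assms(1,2)] assms(4) by blast
  show "real_of_int (foldl (\<lambda>B k. mut k B) A ks i j) =
      (if i \<in> set ks \<or> j \<in> set ks then - real_of_int (A i j)
       else real_of_int (A i j) + (1/2) * (\<Sum>k<length ks.
          real_of_int (\<bar>A i (ks ! k)\<bar> * A (ks ! k) j + A i (ks ! k) * \<bar>A (ks ! k) j\<bar>)))"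
    unfolding foldl_mut_unlinked[OF assms(3) unlinked] of_int_sum_list_mut_gain[symmetric] by simp
qed

end
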